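(* Let $m,n$ be positive integers, $u,v\ge0$ and $t\le 1$. There is a universal constant $C>0$ such that, with $J_k = C\log(en)\big(k + \frac{u\sqrt{nk}}{\tau}\big)$, for every $\tau>0$ and every integer $1\le k<m$, $$\log\mathcal{N}(\mathcal{A}(m,n,u,v,t),\tau) \leq C\Big(J_k + \sqrt{J_k}\frac{v\sqrt m}{\tau\sqrt k}\Big)\Big(\log\Big(J_k + \sqrt{J_k}\frac{v\sqrt m}{\tau\sqrt k}\Big) + \log(emn/\tau)\Big),$$ whereas for $k=m$, $$\log\mathcal{N}(\mathcal{A}(m,n,u,v,t),\tau) \leq C J_k\big(\log J_k + \log(emn/\tau)\big).$$
   Context: For $\theta\in\mathbb{R}^{m\times n}$: $\mathrm{TV}_r(\theta) = \sum_{i\in[m]}\sum_{j\in[n-1]}|\theta[i,j+1]-\theta[i,j]|$, $\mathrm{TV}_c(\theta) = \mathrm{TV}_r(\theta^T)$, and $\mathcal{A}(m,n,u,v,t) = \{\theta\in\mathbb{R}^{m\times n}: \mathrm{TV}_r(\theta)\le u,\ \mathrm{TV}_c(\theta)\le v,\ \|\theta\|\le t\}$ with $\|\cdot\|$ the Frobenius norm. $\mathcal{N}(A,\tau)$ is the minimum number of Frobenius-norm balls of radius $\tau$ needed to cover $A$. *)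

theory Defs
  imports "HOL-Analysis.Analysis"
begin

text \<open>An m x n real matrix is represented as a function nat => nat => real that
  vanishes outside the index range {0..<m} x {0..<n}.\<close>

definition mats :: "nat \<Rightarrow> nat \<Rightarrow> (nat \<Rightarrow> nat \<Rightarrow> real) set" where
  "mats m n = {\<theta>. \<forall>i j. (m \<le> i \<or> n \<le> j) \<longrightarrow> \<theta> i j = 0}"

definition frob :: "nat \<Rightarrow> nat \<Rightarrow> (nat \<Rightarrow> nat \<Rightarrow> real) \<Rightarrow> real" where
  "frob m n \<theta> = sqrt (\<Sum>i<m. \<Sum>j<n. (\<theta> i j)\<^sup>2)"

definition mtrans :: "(nat \<Rightarrow> nat \<Rightarrow> real) \<Rightarrow> (nat \<Rightarrow> nat \<Rightarrow> real)" where
  "mtrans \<theta> = (\<lambda>i j. \<theta> j i)"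

definition TV_r :: "nat \<Rightarrow> nat \<Rightarrow> (nat \<Rightarrow> nat \<Rightarrow> real) \<Rightarrow> real" where
  "TV_r m n \<theta> = (\<Sum>i<m. \<Sum>j<n - 1. \<bar>\<theta> i (j + 1) - \<theta> i j\<bar>)"

definition TV_c :: "nat \<Rightarrow> nat \<Rightarrow> (nat \<Rightarrow> nat \<Rightarrow> real) \<Rightarrow> real" where
  "TV_c m n \<theta> = TV_r n m (mtrans \<theta>)"

definition calA :: "nat \<Rightarrow> nat \<Rightarrow> real \<Rightarrow> real \<Rightarrow> real \<Rightarrow> (nat \<Rightarrow> nat \<Rightarrow> real) set" where
  "calA m n u v t = {\<theta> \<in> mats m n. TV_r m n \<theta> \<le> u \<and> TV_c m n \<theta> \<le> v \<and> frob m n \<theta> \<le> t}"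

text \<open>Covering number of A \<subseteq> R^{m x n} by Frobenius balls of radius \<tau> (closed balls,
  centres anywhere in R^{m x n}).\<close>
definition covnum :: "nat \<Rightarrow> nat \<Rightarrow> (nat \<Rightarrow> nat \<Rightarrow> real) set \<Rightarrow> real \<Rightarrow> nat" where
  "covnum m n A \<tau> = (INF S \<in> {S. finite S \<and> S \<subseteq> mats m n \<and>
       A \<subseteq> (\<Union>c\<in>S. {\<theta> \<in> mats m n. frob m n (\<lambda>i j. \<theta> i j - c i j) \<le> \<tau>})}. card S)"

end

theory Submission
  imports Defs "HOL-Library.FuncSet"
begin

text \<open>Fix a block size \<open>s\<close> and an offset \<open>b < s\<close>, and call the rows \<open>r \<equiv> b (mod s)\<close> leaders.
  A leader row is approximated by a greedy tracker that keeps a grid value until the row moves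
  more than \<open>d\<close> away from it and then jumps to the rounded entry; every other entry is
  approximated by such a tracker, with threshold \<open>D\<close>, running along its column from the
  approximation of its leader. A tracker jumps at most (variation)/(threshold - rounding error)
  times, so for an offset carrying a \<open>1 / s\<close> share of the row variation the approximation is
  determined by \<open>b\<close> and by the positions and grid values of at most
  \<open>m / s + 4 u \<surd>(m n) / (s \<tau>) + 8 s v\<^sup>2 / \<tau>\<^sup>2 + 2\<close> jumps, while its squared error is at most
  \<open>4 m n d\<^sup>2 + 2 c (s - 1) v \<le> \<tau>\<^sup>2\<close>. Counting these codes bounds \<open>log \<N>(\<A>, \<tau>)\<close> by
  \<open>5 log (e m n / \<tau>)\<close> times the number of jumps, and choosing \<open>s \<approx> m / k\<close>, or balancing the
  last two terms when \<open>v\<close> is large, gives the bound.\<close>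

section \<open>Discrete variation and greedy trackers\<close>

definition variation :: "(nat \<Rightarrow> real) \<Rightarrow> nat \<Rightarrow> real" where
  "variation f N = (\<Sum>l<N. \<bar>f (Suc l) - f l\<bar>)"

lemma variation_nonneg: "0 \<le> variation f N"
  unfolding variation_def by (auto intro: sum_nonneg)

lemma variation_Suc: "variation f (Suc N) = variation f N + \<bar>f (Suc N) - f N\<bar>"
  unfolding variation_def by simp

lemma variation_mono: "a \<le> b \<Longrightarrow> variation f a \<le> variation f b"
  unfolding variation_def by (rule sum_mono2) auto

lemma variation_ge_dist:
  assumes "a \<le> b"
  shows "\<bar>f b - f a\<bar> \<le> variation f b - variation f a"
  using assms
proof (induction b)
  case (Suc b)
  show ?case
  proof (cases "a = Suc b")
    case False
    then have "\<bar>f b - f a\<bar> \<le> variation f b - variation f a" using Suc by simp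
    then show ?thesis using variation_Suc[of f b] by linarith
  qed simp
qed simp

lemma variation_shift: "variation (case_nat (x 0) x) N = variation x (N - 1)"
  unfolding variation_def by (cases N) (simp_all del: sum.lessThan_Suc add: sum.lessThan_Suc_shift)

lemma variation_comp_add:
  "variation (\<lambda>l. f (r + l)) N = (\<Sum>l\<in>{r..<r + N}. \<bar>f (Suc l) - f l\<bar>)"
  by (induction N) (simp_all add: variation_def)

lemma variation_comp_diff:
  "N \<le> r \<Longrightarrow> variation (\<lambda>l. f (r - l)) N = (\<Sum>l\<in>{r - N..<r}. \<bar>f (Suc l) - f l\<bar>)"
proof (induction N)
  case (Suc N)
  have "{r - Suc N..<r} = insert (r - Suc N) {r - N..<r}" using Suc.prems by auto
  moreover have "r - N = Suc (r - Suc N)" using Suc.prems by simp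
  ultimately show ?case using Suc by (simp add: variation_Suc abs_minus_commute)
qed (simp add: variation_def)

lemma TV_r_eq: "TV_r m n \<theta> = (\<Sum>r<m. variation (\<theta> r) (n - 1))"
  by (simp add: TV_r_def variation_def)

lemma TV_c_eq: "TV_c m n \<theta> = (\<Sum>j<n. variation (\<lambda>i. \<theta> i j) (m - 1))"
  by (simp add: TV_c_def TV_r_def mtrans_def variation_def)

lemma TV_c_nonneg: "0 \<le> TV_c m n \<theta>"
  by (simp add: TV_c_eq variation_nonneg sum_nonneg)

text \<open>If \<open>e > 2 d\<close>, then \<open>e \<le> 2 V\<close> in both cases, so that \<open>e\<^sup>2 \<le> D * 2 V \<le> 2 c V\<close>.\<close>

lemma square_err_le:
  fixes e d D c V :: real
  assumes "0 \<le> e" "e \<le> D" "D \<le> max c (2 * d)" "e \<le> d + V \<or> D - d \<le> V" "0 \<le> V" "0 < d" "0 < c"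
  shows "e\<^sup>2 \<le> 2 * c * V + 4 * d\<^sup>2"
proof (cases "e \<le> 2 * d")
  case True
  then have "e\<^sup>2 \<le> (2 * d)\<^sup>2" using assms by (intro power_mono) auto
  moreover have "0 \<le> 2 * c * V" using assms by simp
  moreover have "(2 * d)\<^sup>2 = 4 * d\<^sup>2" by (simp add: power_mult_distrib)
  ultimately show ?thesis by linarith
next
  case False
  then have "e \<le> 2 * V" "D \<le> c" using assms by (auto simp: max_def split: if_splits)
  then have "e * e \<le> c * (2 * V)" using assms by (intro mult_mono) auto
  then show ?thesis using zero_le_power2[of d] unfolding power2_eq_square[of e] by linarith
qed

text \<open>A greedy piecewise constant approximation of the signal \<open>x\<close> by values in the range of
  \<open>q\<close>; \<open>track d q p x i\<close> is its value after reading \<open>x 0, \<dots>, x (i - 1)\<close>.\<close>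

fun track :: "real \<Rightarrow> (real \<Rightarrow> real) \<Rightarrow> real \<Rightarrow> (nat \<Rightarrow> real) \<Rightarrow> nat \<Rightarrow> real" where
  "track d q p x 0 = p"
| "track d q p x (Suc i) = (if \<bar>x i - track d q p x i\<bar> \<le> d then track d q p x i else q (x i))"

definition track_jumps :: "real \<Rightarrow> (real \<Rightarrow> real) \<Rightarrow> real \<Rightarrow> (nat \<Rightarrow> real) \<Rightarrow> nat \<Rightarrow> bool" where
  "track_jumps d q p x i \<longleftrightarrow> d < \<bar>x i - track d q p x i\<bar>"

lemma track_Suc_eq:
  "track d q p x (Suc i) = (if track_jumps d q p x i then q (x i) else track d q p x i)"
  by (simp add: track_jumps_def)

declare track.simps(2) [simp del]

lemma track_err:
  assumes "\<And>z. \<bar>q z - z\<bar> \<le> d"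
  shows "\<bar>track d q p x (Suc i) - x i\<bar> \<le> d"
  using assms[of "x i"] by (auto simp: track_Suc_eq track_jumps_def abs_minus_commute)

lemma track_const: "(\<And>l. l < i \<Longrightarrow> \<not> track_jumps d q p x l) \<Longrightarrow> track d q p x i = p"
  by (induction i) (simp_all add: track_Suc_eq)

lemma track_cong:
  assumes "\<And>l. l < k \<Longrightarrow> track_jumps d q p x l = track_jumps d q p x' l"
    and "\<And>l. l < k \<Longrightarrow> track_jumps d q p x l \<Longrightarrow> q (x l) = q (x' l)"
  shows "track d q p x k = track d q p x' k"
  using assms by (induction k) (auto simp: track_Suc_eq)

text \<open>The reference signal is \<open>case_nat y x\<close>, i.e. \<open>x\<close> preceded by a value \<open>y\<close> close to the
  start \<open>p\<close>. Each jump is charged to the variation since the previous jump: just before it the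
  sample is more than \<open>d\<close> away from the held value, which is within \<open>e\<close> of an earlier sample.\<close>

lemma track_jumps_charge:
  assumes q: "\<And>z. \<bar>q z - z\<bar> \<le> e" and p: "\<bar>p - y\<bar> \<le> e"
  shows "\<exists>l\<le>N. \<bar>track d q p x N - case_nat y x l\<bar> \<le> e \<and>
     real (card {i. i < N \<and> track_jumps d q p x i}) * (d - e) \<le> variation (case_nat y x) l"
proof (induction N)
  case 0
  show ?case using p by (auto simp: variation_def)
next
  case (Suc N)
  then obtain l where l: "l \<le> N" "\<bar>track d q p x N - case_nat y x l\<bar> \<le> e"
    "real (card {i. i < N \<and> track_jumps d q p x i}) * (d - e) \<le> variation (case_nat y x) l"
    by blast
  show ?case
  proof (cases "track_jumps d q p x N")
    case False
    then have "{i. i < Suc N \<and> track_jumps d q p x i} = {i. i < N \<and> track_jumps d q p x i}"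
      using less_Suc_eq by auto
    moreover have "track d q p x (Suc N) = track d q p x N"
      using False by (simp add: track_Suc_eq)
    ultimately show ?thesis using l by (intro exI[of _ l]) auto
  next
    case True
    have "{i. i < Suc N \<and> track_jumps d q p x i} = insert N {i. i < N \<and> track_jumps d q p x i}"
      using True less_Suc_eq by auto
    then have card: "card {i. i < Suc N \<and> track_jumps d q p x i}
        = Suc (card {i. i < N \<and> track_jumps d q p x i})" by simp
    have "d - e < \<bar>case_nat y x (Suc N) - case_nat y x l\<bar>"
      using True l(2) by (simp add: track_jumps_def)
    also have "\<dots> \<le> variation (case_nat y x) (Suc N) - variation (case_nat y x) l"
      using variation_ge_dist[of l "Suc N" "case_nat y x"] l(1) by simp
    finally have "real (card {i. i < Suc N \<and> track_jumps d q p x i}) * (d - e)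
        \<le> variation (case_nat y x) (Suc N)"
      unfolding card using l(3) by (simp add: algebra_simps)
    moreover have "\<bar>track d q p x (Suc N) - case_nat y x (Suc N)\<bar> \<le> e"
      using True q[of "x N"] by (simp add: track_Suc_eq)
    ultimately show ?thesis by (intro exI[of _ "Suc N"]) auto
  qed
qed

lemma card_track_jumps_le:
  assumes "\<And>z. \<bar>q z - z\<bar> \<le> e" and "\<bar>p - y\<bar> \<le> e" and "e < d"
  shows "real (card {i. i < N \<and> track_jumps d q p x i}) \<le> variation (case_nat y x) N / (d - e)"
proof -
  obtain l where "l \<le> N"
    "real (card {i. i < N \<and> track_jumps d q p x i}) * (d - e) \<le> variation (case_nat y x) l"
    using track_jumps_charge[OF assms(1,2)] by blast
  then have "real (card {i. i < N \<and> track_jumps d q p x i}) * (d - e) \<le> variation (case_nat y x) N"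
    using variation_mono order_trans by blast
  then show ?thesis using assms(3) by (simp add: field_simps)
qed

lemma track_err_or_variation:
  assumes q: "\<And>z. \<bar>q z - z\<bar> \<le> e" and p: "\<bar>p - y\<bar> \<le> e"
  shows "\<bar>track d q p x (Suc i) - x i\<bar> \<le> e + variation (case_nat y x) (Suc i)
    \<or> d - e \<le> variation (case_nat y x) (Suc i)"
proof (cases "\<exists>l\<le>i. track_jumps d q p x l")
  case True
  then have "{l. l < Suc i \<and> track_jumps d q p x l} \<noteq> {}" by (auto simp: less_Suc_eq_le)
  then have card: "1 \<le> card {l. l < Suc i \<and> track_jumps d q p x l}"
    by (simp add: Suc_leI card_gt_0_iff)
  obtain l where l: "l \<le> Suc i"
    "real (card {l. l < Suc i \<and> track_jumps d q p x l}) * (d - e) \<le> variation (case_nat y x) l"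
    using track_jumps_charge[OF q p] by blast
  have "d - e \<le> variation (case_nat y x) (Suc i)"
  proof (cases "d \<le> e")
    case False
    then have "d - e \<le> real (card {l. l < Suc i \<and> track_jumps d q p x l}) * (d - e)"
      using card mult_right_mono[of 1 _ "d - e"] by simp
    also have "\<dots> \<le> variation (case_nat y x) l" by (rule l(2))
    also have "\<dots> \<le> variation (case_nat y x) (Suc i)" by (rule variation_mono[OF l(1)])
    finally show ?thesis .
  qed (use variation_nonneg[of "case_nat y x" "Suc i"] in linarith)
  then show ?thesis by simp
next
  case False
  then have "track d q p x (Suc i) = p" by (intro track_const) auto
  moreover have "\<bar>x i - y\<bar> \<le> variation (case_nat y x) (Suc i)"
    using variation_ge_dist[of 0 "Suc i" "case_nat y x"] variation_nonneg[of "case_nat y x" 0]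
    by (simp add: variation_def)
  ultimately show ?thesis using p by (simp add: abs_le_iff)
qed

lemma sum_sum_le_overlap:
  fixes g :: "'b \<Rightarrow> real"
  assumes "finite A" "finite B" "\<And>i. i \<in> A \<Longrightarrow> I i \<subseteq> B"
    and "\<And>l. l \<in> B \<Longrightarrow> card {i\<in>A. l \<in> I i} \<le> c" and "\<And>l. 0 \<le> g l"
  shows "(\<Sum>i\<in>A. \<Sum>l\<in>I i. g l) \<le> real c * (\<Sum>l\<in>B. g l)"
proof -
  have "(\<Sum>l\<in>I i. g l) = (\<Sum>l\<in>B. if l \<in> I i then g l else 0)" if "i \<in> A" for i
  proof -
    have "I i = B \<inter> I i" using assms(3)[OF that] by auto
    then show ?thesis using sum.inter_restrict[OF assms(2), of g "I i"] by simp
  qed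
  then have "(\<Sum>i\<in>A. \<Sum>l\<in>I i. g l) = (\<Sum>i\<in>A. \<Sum>l\<in>B. if l \<in> I i then g l else 0)"
    by (rule sum.cong[OF refl])
  also have "\<dots> = (\<Sum>l\<in>B. \<Sum>i\<in>A. if l \<in> I i then g l else 0)" by (rule sum.swap)
  also have "\<dots> = (\<Sum>l\<in>B. real (card {i\<in>A. l \<in> I i}) * g l)"
    using assms(1) by (intro sum.cong refl) (simp add: sum.inter_filter[symmetric])
  also have "\<dots> \<le> (\<Sum>l\<in>B. real c * g l)"
    using assms(4,5) by (intro sum_mono mult_right_mono) auto
  finally show ?thesis by (simp add: sum_distrib_left)
qed

text \<open>Every nonempty set of at most \<open>P\<close> elements of \<open>T\<close> is the range of a map \<open>{..<P} \<rightarrow> T\<close>.\<close>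

lemma card_subsets_card_le:
  assumes T: "finite T"
  shows "card {X. X \<subseteq> T \<and> card X \<le> P} \<le> card T ^ P + 1"
proof -
  let ?F = "(\<lambda>f. f ` {..<P}) ` (PiE {..<P} (\<lambda>_. T))"
  have "X \<in> insert {} ?F" if X: "X \<subseteq> T" "card X \<le> P" for X
  proof (cases "X = {}")
    case False
    obtain xs where xs: "set xs = X" "distinct xs"
      using finite_distinct_list finite_subset[OF X(1) T] by blast
    then have len: "0 < length xs" "length xs \<le> P"
      using False X(2) distinct_card[OF xs(2)] by auto
    define f where "f p = xs ! (min p (length xs - 1))" for p
    have "f ` {..<P} = X"
    proof
      have "min p (length xs - 1) < length xs" for p using len(1) by linarith
      then show "f ` {..<P} \<subseteq> X" unfolding f_def using xs(1) by auto
      show "X \<subseteq> f ` {..<P}"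
      proof
        fix x assume "x \<in> X"
        then obtain p where "p < length xs" "xs ! p = x" using xs(1) by (metis in_set_conv_nth)
        then show "x \<in> f ` {..<P}" using len unfolding f_def by (intro image_eqI[of _ _ p]) auto
      qed
    qed
    then have "restrict f {..<P} \<in> PiE {..<P} (\<lambda>_. T)" "restrict f {..<P} ` {..<P} = X"
      using X(1) by auto
    then show ?thesis by blast
  qed simp
  then have "card {X. X \<subseteq> T \<and> card X \<le> P} \<le> card (insert {} ?F)"
    by (intro card_mono) (auto simp: T finite_PiE)
  also have "\<dots> \<le> Suc (card (PiE {..<P} (\<lambda>_. T)))"
    by (rule order_trans[OF card_insert_le_m1]) (auto intro: card_image_le simp: T finite_PiE)
  finally show ?thesis by (simp add: card_PiE)
qed

section \<open>Row blocks\<close>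

text \<open>For an offset \<open>b < s\<close>, the rows \<open>r \<equiv> b (mod s)\<close> are leaders, and every row
  \<open>i\<close> is reached from its leader \<open>lead b i\<close> by a walk of \<open>depth b i\<close> steps, downwards from the
  nearest leader above it or, if \<open>i < b\<close>, upwards from row \<open>b\<close>.\<close>

locale row_blocks =
  fixes m s :: nat
  assumes s_pos: "0 < s" and s_le_m: "s \<le> m"
begin

definition lead :: "nat \<Rightarrow> nat \<Rightarrow> nat" where
  "lead b i = (if i < b then b else b + (i - b) div s * s)"

definition depth :: "nat \<Rightarrow> nat \<Rightarrow> nat" where
  "depth b i = (if i < b then b - i else i - lead b i)"

definition walk :: "nat \<Rightarrow> nat \<Rightarrow> nat \<Rightarrow> nat" where
  "walk b i l = (if i < b then b - l else lead b i + l)"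

definition window :: "nat \<Rightarrow> nat \<Rightarrow> nat set" where
  "window b i = (if i < b then {i..<b} else {lead b i..<i})"

definition leaders :: "nat \<Rightarrow> nat set" where
  "leaders b = {r. r < m \<and> r mod s = b}"

lemma lead_ge:
  assumes "b \<le> i"
  shows "b \<le> lead b i" "lead b i \<le> i" "i - lead b i = (i - b) mod s"
proof -
  have "(i - b) div s * s + (i - b) mod s = i - b" by (rule div_mult_mod_eq)
  moreover have "lead b i = b + (i - b) div s * s" using assms unfolding lead_def by simp
  ultimately show "b \<le> lead b i" "lead b i \<le> i" "i - lead b i = (i - b) mod s"
    using assms by arith+
qed

lemma lead_gt: "b \<le> i \<Longrightarrow> i < lead b i + s"
  using lead_ge[of b i] s_pos mod_less_divisor[of s "i - b"] by linarith

lemma lead_eqI: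
  assumes "b + a * s \<le> l" "l < b + a * s + s"
  shows "lead b l = b + a * s"
proof -
  have "(l - b) div s = a" using assms by (intro div_nat_eqI) (auto simp: algebra_simps)
  then show ?thesis using assms unfolding lead_def by auto
qed

lemma lead_same:
  assumes "b \<le> i" "lead b i \<le> l" "l \<le> i"
  shows "lead b l = lead b i"
proof -
  have "lead b i = b + (i - b) div s * s" using assms unfolding lead_def by auto
  then show ?thesis using lead_gt[OF assms(1)] assms by (metis lead_eqI le_less_trans)
qed

lemma lead_less: "b < s \<Longrightarrow> i < m \<Longrightarrow> lead b i < m"
  using s_le_m lead_ge(2)[of b i] unfolding lead_def by (auto split: if_splits)

lemma depth_lead: "depth b (lead b i) = 0"
  using lead_same[of b i "lead b i"] lead_ge[of b i] unfolding depth_def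
  by (cases "i < b") (auto simp: lead_def)

lemma depth_eq_0_iff:
  assumes "b < s"
  shows "depth b r = 0 \<longleftrightarrow> r mod s = b"
proof (cases "r < b")
  case False
  then have "depth b r = (r - b) mod s" using lead_ge[of b r] unfolding depth_def by auto
  moreover have "(r - b) mod s = 0 \<longleftrightarrow> r mod s = b mod s"
    using False mod_eq_dvd_iff_nat[of b r s] by (simp add: dvd_eq_mod_eq_0)
  ultimately show ?thesis using assms by simp
qed (use assms in \<open>auto simp: depth_def\<close>)

lemma depth_eq_0D: "depth b r = 0 \<Longrightarrow> b \<le> r \<and> lead b r = r"
  unfolding depth_def using lead_ge[of b r] by (auto split: if_splits)

lemma walk_0: "walk b i 0 = lead b i"
  by (simp add: walk_def lead_def)

lemma walk_depth: "walk b i (depth b i) = i"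
  unfolding walk_def depth_def using lead_ge[of b i] by auto

lemma walk_step:
  assumes "b < s" "i < m" "l < depth b i"
  shows "walk b i (Suc l) < m" "depth b (walk b i (Suc l)) = Suc l"
    "lead b (walk b i (Suc l)) = lead b i" "walk b (walk b i (Suc l)) = walk b i"
proof -
  have "walk b i (Suc l) < m \<and> depth b (walk b i (Suc l)) = Suc l
     \<and> lead b (walk b i (Suc l)) = lead b i \<and> (walk b i (Suc l) < b \<longleftrightarrow> i < b)"
  proof (cases "i < b")
    case True
    then show ?thesis using assms s_le_m unfolding walk_def depth_def lead_def by auto
  next
    case False
    have "lead b (lead b i + Suc l) = lead b i"
      using lead_same[of b i "lead b i + Suc l"] lead_ge[of b i] False assms(3)
      unfolding depth_def by auto
    then show ?thesis using False lead_ge[of b i] assms unfolding walk_def depth_def by auto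
  qed
  then show "walk b i (Suc l) < m" "depth b (walk b i (Suc l)) = Suc l"
    "lead b (walk b i (Suc l)) = lead b i" "walk b (walk b i (Suc l)) = walk b i"
    by (auto simp: walk_def fun_eq_iff)
qed

lemma variation_walk:
  "variation (\<lambda>l. f (walk b i l)) (depth b i) = (\<Sum>l\<in>window b i. \<bar>f (Suc l) - f l\<bar>)"
proof (cases "i < b")
  case True
  then have "variation (\<lambda>l. f (walk b i l)) (depth b i) = variation (\<lambda>l. f (b - l)) (b - i)"
    by (simp add: walk_def depth_def)
  then show ?thesis using True variation_comp_diff[of "b - i" b f] by (simp add: window_def)
next
  case False
  then have "variation (\<lambda>l. f (walk b i l)) (depth b i)
      = variation (\<lambda>l. f (lead b i + l)) (i - lead b i)"
    by (simp add: walk_def depth_def)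
  then show ?thesis using False lead_ge(2)[of b i] by (simp add: variation_comp_add window_def)
qed

lemma window_subset: "b < s \<Longrightarrow> i < m \<Longrightarrow> window b i \<subseteq> {..<m - 1}"
  using s_le_m unfolding window_def by auto

text \<open>A column increment \<open>l\<close> lies in the windows of fewer than \<open>s\<close> rows: those between \<open>l\<close> and
  the end of its block.\<close>

lemma card_window_le:
  assumes "b < s"
  shows "card {i \<in> {i. i < m \<and> 0 < depth b i}. l \<in> window b i} \<le> s - 1"
proof (cases "l < b")
  case True
  have "{i \<in> {i. i < m \<and> 0 < depth b i}. l \<in> window b i} \<subseteq> {..l}"
  proof
    fix i assume "i \<in> {i \<in> {i. i < m \<and> 0 < depth b i}. l \<in> window b i}"
    then show "i \<in> {..l}"
      using True lead_ge(1)[of b i] unfolding window_def by (auto split: if_splits)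
  qed
  then have "card {i \<in> {i. i < m \<and> 0 < depth b i}. l \<in> window b i} \<le> card {..l}"
    by (intro card_mono) auto
  then show ?thesis using True assms by simp
next
  case False
  have "{i \<in> {i. i < m \<and> 0 < depth b i}. l \<in> window b i} \<subseteq> {Suc l..<lead b l + s}"
  proof
    fix i assume "i \<in> {i \<in> {i. i < m \<and> 0 < depth b i}. l \<in> window b i}"
    then have i: "b \<le> i" "lead b i \<le> l" "l < i" using False unfolding window_def by (auto split: if_splits)
    then show "i \<in> {Suc l..<lead b l + s}" using lead_same[of b i l] lead_gt[of b i] by simp
  qed
  then have "card {i \<in> {i. i < m \<and> 0 < depth b i}. l \<in> window b i} \<le> card {Suc l..<lead b l + s}"
    by (intro card_mono) auto
  then show ?thesis using lead_ge(2)[of b l] False by simp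
qed

text \<open>The windows of the last rows of all blocks are pairwise disjoint.\<close>

lemma sum_block_windows_le:
  fixes g :: "nat \<Rightarrow> real"
  assumes b: "b < s" and g: "\<And>l. 0 \<le> g l"
  shows "(\<Sum>l<b. g l) + (\<Sum>r\<in>leaders b. \<Sum>l\<in>{r..<r + min (m - Suc r) (s - 1)}. g l) \<le> (\<Sum>l<m - 1. g l)"
proof -
  define I where "I r = (if r = m then {..<b} else {r..<r + min (m - Suc r) (s - 1)})" for r
  have fin: "finite (leaders b)" "m \<notin> leaders b" unfolding leaders_def by auto
  have leader: "b \<le> r \<and> lead b r = r" if "r \<in> leaders b" for r
    using that depth_eq_0D depth_eq_0_iff[OF b] unfolding leaders_def by blast
  have "(\<Sum>r\<in>leaders b. \<Sum>l\<in>I r. g l) = (\<Sum>r\<in>leaders b. \<Sum>l\<in>{r..<r + min (m - Suc r) (s - 1)}. g l)"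
    using fin(2) by (intro sum.cong refl) (auto simp: I_def)
  then have "(\<Sum>l<b. g l) + (\<Sum>r\<in>leaders b. \<Sum>l\<in>{r..<r + min (m - Suc r) (s - 1)}. g l)
      = (\<Sum>r\<in>insert m (leaders b). \<Sum>l\<in>I r. g l)"
    using fin by (simp add: I_def)
  also have "\<dots> \<le> real 1 * (\<Sum>l<m - 1. g l)"
  proof (rule sum_sum_le_overlap)
    show "I r \<subseteq> {..<m - 1}" if "r \<in> insert m (leaders b)" for r
      using that b s_le_m unfolding I_def leaders_def by auto
    show "card {r \<in> insert m (leaders b). l \<in> I r} \<le> 1" for l
    proof -
      have "{r \<in> insert m (leaders b). l \<in> I r} \<subseteq> {if l < b then m else lead b l}"
      proof
        fix r assume r: "r \<in> {r \<in> insert m (leaders b). l \<in> I r}"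
        show "r \<in> {if l < b then m else lead b l}"
        proof (cases "r = m")
          case False
          then have "r \<in> leaders b" "r \<le> l" "l < r + s" using r unfolding I_def by auto
          moreover have "r = b + (r - b) div s * s"
            using leader[OF \<open>r \<in> leaders b\<close>] unfolding lead_def by (auto split: if_splits)
          ultimately show ?thesis using leader lead_eqI[of b "(r - b) div s" l] by auto
        qed (use r in \<open>auto simp: I_def\<close>)
      qed
      then have "card {r \<in> insert m (leaders b). l \<in> I r} \<le> card {if l < b then m else lead b l}"
        by (rule card_mono[rotated]) simp
      then show ?thesis by simp
    qed
  qed (use fin g in auto)
  finally show ?thesis by simp
qed

lemma card_leaders_le: "real (card (leaders b)) \<le> real (m - 1) / real s + 1"
proof -
  have "inj_on (\<lambda>r. r div s) (leaders b)"
    by (rule inj_onI) (metis (mono_tags) div_mult_mod_eq leaders_def mem_Collect_eq)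
  moreover have "(\<lambda>r. r div s) ` leaders b \<subseteq> {..(m - 1) div s}"
    unfolding leaders_def by (auto intro: div_le_mono)
  ultimately have "card (leaders b) \<le> (m - 1) div s + 1"
    using card_inj_on_le[of "\<lambda>r. r div s" "leaders b" "{..(m - 1) div s}"] by simp
  then have "real (card (leaders b)) \<le> real ((m - 1) div s) + 1" by linarith
  also have "real ((m - 1) div s) \<le> real (m - 1) / real s" by (rule of_nat_div_le_of_nat)
  finally show ?thesis by simp
qed

lemma ex_leaders_sum_le: "\<exists>b<s. (\<Sum>r\<in>leaders b. f r) \<le> (\<Sum>r<m. f r) / real s"
proof (rule ccontr)
  assume "\<not> ?thesis"
  then have "(\<Sum>b<s. (\<Sum>r<m. f r) / real s) < (\<Sum>b<s. \<Sum>r\<in>leaders b. f r)"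
    using s_pos by (intro sum_strict_mono) (auto simp: not_le)
  also have "(\<Sum>b<s. \<Sum>r\<in>leaders b. f r) = (\<Sum>b<s. \<Sum>r\<in>{r \<in> {..<m}. r mod s = b}. f r)"
    by (simp add: leaders_def)
  also have "\<dots> = (\<Sum>r<m. f r)" by (rule sum.group) (use s_pos in auto)
  finally show False using s_pos by simp
qed

end

section \<open>The approximation and its code\<close>

text \<open>The approximation of \<open>\<theta>\<close> for offset \<open>b\<close>: leader rows are tracked along the row with
  threshold \<open>d\<close>; entry \<open>(i, j)\<close> is the value, after \<open>depth b i\<close> steps, of a tracker with
  threshold \<open>D\<close> running along column \<open>j\<close> from the approximation of the leader of row \<open>i\<close>
  (on leader rows, the row approximation itself).\<close>

locale tv_approx = row_blocks m s
  for m n s :: nat and d D \<eta> :: real +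
  assumes grid_pos: "0 < \<eta>" and grid_le: "\<eta> \<le> d / 2" and thresholds: "2 * d \<le> D"
begin

definition quant :: "real \<Rightarrow> real" where
  "quant x = \<eta> * of_int (round (x / \<eta>))"

definition row_apx :: "(nat \<Rightarrow> nat \<Rightarrow> real) \<Rightarrow> nat \<Rightarrow> nat \<Rightarrow> real" where
  "row_apx \<theta> r j = track d quant (quant (\<theta> r 0)) (\<theta> r) (Suc j)"

definition col_path :: "(nat \<Rightarrow> nat \<Rightarrow> real) \<Rightarrow> nat \<Rightarrow> nat \<Rightarrow> nat \<Rightarrow> nat \<Rightarrow> real" where
  "col_path \<theta> b i j l = \<theta> (walk b i (Suc l)) j"

definition apx :: "(nat \<Rightarrow> nat \<Rightarrow> real) \<Rightarrow> nat \<Rightarrow> nat \<Rightarrow> nat \<Rightarrow> real" where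
  "apx \<theta> b i j = (if i < m \<and> j < n
     then track D quant (row_apx \<theta> (lead b i) j) (col_path \<theta> b i j) (depth b i) else 0)"

definition jumps :: "(nat \<Rightarrow> nat \<Rightarrow> real) \<Rightarrow> nat \<Rightarrow> (nat \<times> nat) set" where
  "jumps \<theta> b = {(i, j). i < m \<and> j < n \<and>
     (if depth b i = 0 then j = 0 \<or> track_jumps d quant (quant (\<theta> i 0)) (\<theta> i) j
      else track_jumps D quant (row_apx \<theta> (lead b i) j) (col_path \<theta> b i j) (depth b i - 1))}"

text \<open>Column \<open>0\<close> of a leader row is always recorded, as its tracker starts at the quantized
  first entry.\<close>

definition code :: "(nat \<Rightarrow> nat \<Rightarrow> real) \<Rightarrow> nat \<Rightarrow> (nat \<times> nat \<times> int) set" where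
  "code \<theta> b = (\<lambda>(i, j). (i, j, round (\<theta> i j / \<eta>))) ` jumps \<theta> b"

lemma quant_err: "\<bar>quant z - z\<bar> \<le> \<eta> / 2"
proof -
  have "quant z - z = \<eta> * (of_int (round (z / \<eta>)) - z / \<eta>)"
    using grid_pos by (simp add: quant_def field_simps)
  then have "\<bar>quant z - z\<bar> = \<eta> * \<bar>of_int (round (z / \<eta>)) - z / \<eta>\<bar>"
    using grid_pos by (simp add: abs_mult)
  also have "\<dots> \<le> \<eta> * (1 / 2)"
    using grid_pos of_int_round_abs_le[of "z / \<eta>"] by (intro mult_left_mono) auto
  finally show ?thesis by simp
qed

lemma quant_err_le: "\<bar>quant z - z\<bar> \<le> d"
  using quant_err[of z] grid_le grid_pos by simp

lemma quant_err_le_col: "\<bar>quant z - z\<bar> \<le> D"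
  using quant_err_le[of z] grid_pos grid_le thresholds by simp

lemma row_apx_err: "\<bar>row_apx \<theta> r j - \<theta> r j\<bar> \<le> d"
  unfolding row_apx_def by (rule track_err[OF quant_err_le])

lemma jumps_subset: "jumps \<theta> b \<subseteq> {..<m} \<times> {..<n}"
  unfolding jumps_def by auto

lemma finite_jumps: "finite (jumps \<theta> b)"
  using finite_subset[OF jumps_subset] by blast

lemma card_code_le: "card (code \<theta> b) \<le> card (jumps \<theta> b)"
  unfolding code_def by (rule card_image_le[OF finite_jumps])

lemma jumps_code: "jumps \<theta> b = (\<lambda>(i, j, z). (i, j)) ` code \<theta> b"
  unfolding code_def image_image by (auto simp: case_prod_beta image_iff)

lemma quant_eq_if_code_eq:
  assumes "code \<theta> b = code \<theta>' b" "(i, j) \<in> jumps \<theta> b"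
  shows "quant (\<theta> i j) = quant (\<theta>' i j)"
proof -
  have "(i, j, round (\<theta> i j / \<eta>)) \<in> code \<theta>' b" using assms unfolding code_def by force
  then have "round (\<theta> i j / \<eta>) = round (\<theta>' i j / \<eta>)" unfolding code_def by auto
  then show ?thesis unfolding quant_def by simp
qed

lemma row_apx_eq_if_code_eq:
  assumes code: "code \<theta> b = code \<theta>' b" and r: "r < m" "depth b r = 0" and "j < n"
  shows "row_apx \<theta> r j = row_apx \<theta>' r j"
proof -
  have J: "jumps \<theta> b = jumps \<theta>' b" using code jumps_code by metis
  have "(r, 0) \<in> jumps \<theta> b" using assms unfolding jumps_def by auto
  then have p: "quant (\<theta> r 0) = quant (\<theta>' r 0)" using quant_eq_if_code_eq[OF code] by blast
  have no_jump_0: "\<not> track_jumps d quant (quant (x 0)) x 0" for x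
    using quant_err_le[of "x 0"] by (simp add: track_jumps_def abs_minus_commute)
  have jump_iff: "(r, l) \<in> jumps \<theta> b \<longleftrightarrow> track_jumps d quant (quant (\<theta> r 0)) (\<theta> r) l"
    if "0 < l" "l \<le> j" for l \<theta>
    using that assms(3,4) r unfolding jumps_def by auto
  have "track d quant (quant (\<theta> r 0)) (\<theta> r) (Suc j) = track d quant (quant (\<theta> r 0)) (\<theta>' r) (Suc j)"
  proof (rule track_cong)
    fix l assume l: "l < Suc j"
    show "track_jumps d quant (quant (\<theta> r 0)) (\<theta> r) l = track_jumps d quant (quant (\<theta> r 0)) (\<theta>' r) l"
      using no_jump_0[of "\<theta> r"] no_jump_0[of "\<theta>' r"] jump_iff[of l \<theta>] jump_iff[of l \<theta>'] J p l
      by (cases "l = 0") auto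
    assume "track_jumps d quant (quant (\<theta> r 0)) (\<theta> r) l"
    then have "(r, l) \<in> jumps \<theta> b" using no_jump_0[of "\<theta> r"] jump_iff[of l \<theta>] l by (cases "l = 0") auto
    then show "quant (\<theta> r l) = quant (\<theta>' r l)" by (rule quant_eq_if_code_eq[OF code])
  qed
  then show ?thesis unfolding row_apx_def p by simp
qed

lemma apx_eq_if_code_eq:
  assumes b: "b < s" and code: "code \<theta> b = code \<theta>' b"
  shows "apx \<theta> b = apx \<theta>' b"
proof (intro ext)
  fix i j
  show "apx \<theta> b i j = apx \<theta>' b i j"
  proof (cases "i < m \<and> j < n")
    case True
    have J: "jumps \<theta> b = jumps \<theta>' b" using code jumps_code by metis
    let ?p = "row_apx \<theta> (lead b i) j"
    have p: "?p = row_apx \<theta>' (lead b i) j"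
      using row_apx_eq_if_code_eq[OF code lead_less[OF b] depth_lead] True by blast
    have jump_iff: "(walk b i (Suc l), j) \<in> jumps \<phi> b
        \<longleftrightarrow> track_jumps D quant (row_apx \<phi> (lead b i) j) (col_path \<phi> b i j) l"
      if "l < depth b i" for l \<phi>
    proof -
      have "col_path \<phi> b (walk b i (Suc l)) j = col_path \<phi> b i j"
        using walk_step(4)[OF b _ that] True by (simp add: col_path_def fun_eq_iff)
      then show ?thesis
        using walk_step(1-3)[OF b _ that] True unfolding jumps_def by auto
    qed
    have "track D quant ?p (col_path \<theta> b i j) (depth b i) = track D quant ?p (col_path \<theta>' b i j) (depth b i)"
    proof (rule track_cong)
      fix l assume l: "l < depth b i"
      show "track_jumps D quant ?p (col_path \<theta> b i j) l = track_jumps D quant ?p (col_path \<theta>' b i j) l"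
        using jump_iff[OF l, of \<theta>] jump_iff[OF l, of \<theta>'] J p by simp
      assume "track_jumps D quant ?p (col_path \<theta> b i j) l"
      then have "(walk b i (Suc l), j) \<in> jumps \<theta> b" using jump_iff[OF l] by simp
      then show "quant (col_path \<theta> b i j l) = quant (col_path \<theta>' b i j l)"
        unfolding col_path_def by (rule quant_eq_if_code_eq[OF code])
    qed
    then show ?thesis using True p by (simp add: apx_def)
  qed (auto simp: apx_def)
qed

lemma apx_mats: "apx \<theta> b \<in> mats m n"
  unfolding mats_def apx_def by auto


lemma apx_err:
  assumes b: "b < s" and i: "i < m" and j: "j < n" and c: "0 < c" "D \<le> max c (2 * d)"
  shows "(\<theta> i j - apx \<theta> b i j)\<^sup>2
    \<le> 4 * d\<^sup>2 + 2 * c * (if depth b i = 0 then 0 else \<Sum>l\<in>window b i. \<bar>\<theta> (Suc l) j - \<theta> l j\<bar>)"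
proof (cases "depth b i")
  case 0
  then have "\<bar>\<theta> i j - apx \<theta> b i j\<bar> \<le> d"
    using i j row_apx_err[of \<theta> i j] depth_eq_0D[of b i] by (simp add: apx_def abs_minus_commute)
  then have "(\<theta> i j - apx \<theta> b i j)\<^sup>2 \<le> d\<^sup>2"
    by (metis abs_ge_zero power2_abs power_mono)
  then have "(\<theta> i j - apx \<theta> b i j)\<^sup>2 \<le> 4 * d\<^sup>2" using zero_le_power2[of d] by linarith
  then show ?thesis using 0 by simp
next
  case (Suc k)
  let ?x = "col_path \<theta> b i j" and ?y = "\<theta> (lead b i) j" and ?p = "row_apx \<theta> (lead b i) j"
  have path: "case_nat ?y ?x = (\<lambda>l. \<theta> (walk b i l) j)"
    by (auto simp: fun_eq_iff col_path_def walk_0 split: nat.split)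
  have last: "?x k = \<theta> i j" using walk_depth[of b i] Suc by (simp add: col_path_def)
  have apx: "apx \<theta> b i j = track D quant ?p ?x (Suc k)" using i j Suc by (simp add: apx_def)
  have err: "\<bar>track D quant ?p ?x (Suc k) - ?x k\<bar> \<le> D"
    by (rule track_err[OF quant_err_le_col])
  have "\<bar>track D quant ?p ?x (Suc k) - ?x k\<bar> \<le> d + variation (case_nat ?y ?x) (Suc k)
      \<or> D - d \<le> variation (case_nat ?y ?x) (Suc k)"
    by (rule track_err_or_variation[OF quant_err_le row_apx_err])
  moreover have "variation (case_nat ?y ?x) (Suc k) = (\<Sum>l\<in>window b i. \<bar>\<theta> (Suc l) j - \<theta> l j\<bar>)"
    unfolding path Suc[symmetric] by (rule variation_walk)
  ultimately have "\<bar>track D quant ?p ?x (Suc k) - ?x k\<bar>\<^sup>2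
      \<le> 2 * c * (\<Sum>l\<in>window b i. \<bar>\<theta> (Suc l) j - \<theta> l j\<bar>) + 4 * d\<^sup>2"
    using square_err_le[OF _ err c(2)] c(1) grid_pos grid_le by (simp add: sum_nonneg)
  then show ?thesis using Suc apx last by (simp add: power2_abs abs_minus_commute)
qed

text \<open>Summing the entrywise bound, every column increment is charged by at most \<open>s - 1\<close> rows.\<close>

lemma apx_sq_err_sum:
  assumes b: "b < s" and c: "0 < c" "D \<le> max c (2 * d)"
  shows "(\<Sum>i<m. \<Sum>j<n. (\<theta> i j - apx \<theta> b i j)\<^sup>2) \<le> 4 * m * n * d\<^sup>2 + 2 * c * real (s - 1) * TV_c m n \<theta>"
proof -
  let ?g = "\<lambda>j l. \<bar>\<theta> (Suc l) j - \<theta> l j\<bar>"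
  let ?F = "\<lambda>i j. if depth b i = 0 then 0 else \<Sum>l\<in>window b i. ?g j l"
  let ?A = "{i. i < m \<and> 0 < depth b i}"
  have F: "(\<Sum>i<m. ?F i j) = (\<Sum>i\<in>?A. \<Sum>l\<in>window b i. ?g j l)" for j
    by (simp add: sum.If_cases Collect_conj_eq lessThan_def Int_commute flip: Collect_neg_eq)
  have "(\<Sum>i<m. \<Sum>j<n. (\<theta> i j - apx \<theta> b i j)\<^sup>2) \<le> (\<Sum>i<m. \<Sum>j<n. 4 * d\<^sup>2 + 2 * c * ?F i j)"
    using apx_err[OF b _ _ c] by (intro sum_mono) auto
  also have "\<dots> = 4 * m * n * d\<^sup>2 + 2 * c * (\<Sum>i<m. \<Sum>j<n. ?F i j)"
    by (simp add: sum.distrib sum_distrib_left)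
  also have "(\<Sum>i<m. \<Sum>j<n. ?F i j) = (\<Sum>j<n. \<Sum>i\<in>?A. \<Sum>l\<in>window b i. ?g j l)"
    unfolding F[symmetric] by (rule sum.swap)
  also have "(\<Sum>j<n. \<Sum>i\<in>?A. \<Sum>l\<in>window b i. ?g j l) \<le> (\<Sum>j<n. real (s - 1) * (\<Sum>l<m - 1. ?g j l))"
    using window_subset[OF b] card_window_le[OF b]
    by (intro sum_mono sum_sum_le_overlap) auto
  also have "\<dots> = real (s - 1) * TV_c m n \<theta>"
    by (simp add: TV_c_eq variation_def sum_distrib_left)
  finally show ?thesis using c by (simp add: mult_left_mono)
qed


lemma card_row_jumps_le:
  "real (card {j. j < n \<and> (j = 0 \<or> track_jumps d quant (quant (\<theta> r 0)) (\<theta> r) j)})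
    \<le> 1 + variation (\<theta> r) (n - 1) / (d - \<eta> / 2)"
proof -
  let ?J = "{j. j < n \<and> track_jumps d quant (quant (\<theta> r 0)) (\<theta> r) j}"
  have "card {j. j < n \<and> (j = 0 \<or> track_jumps d quant (quant (\<theta> r 0)) (\<theta> r) j)} \<le> card (insert 0 ?J)"
    by (intro card_mono) auto
  also have "\<dots> \<le> Suc (card ?J)" by (rule card_insert_le_m1) auto
  finally have "real (card {j. j < n \<and> (j = 0 \<or> track_jumps d quant (quant (\<theta> r 0)) (\<theta> r) j)})
      \<le> 1 + real (card ?J)" by simp
  moreover have "real (card ?J) \<le> variation (case_nat (\<theta> r 0) (\<theta> r)) n / (d - \<eta> / 2)"
    using quant_err grid_pos grid_le by (intro card_track_jumps_le) auto
  ultimately show ?thesis by (simp add: variation_shift)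
qed

definition jump_rows :: "(nat \<Rightarrow> nat \<Rightarrow> real) \<Rightarrow> nat \<Rightarrow> (nat \<Rightarrow> nat) \<Rightarrow> nat \<Rightarrow> nat set" where
  "jump_rows \<theta> j w N = (\<lambda>l. w (Suc l)) `
     {l. l < N \<and> track_jumps D quant (row_apx \<theta> (w 0) j) (\<lambda>l. \<theta> (w (Suc l)) j) l}"

lemma card_jump_rows_le:
  "real (card (jump_rows \<theta> j w N)) \<le> variation (\<lambda>l. \<theta> (w l) j) N / (D - d)"
proof -
  have "real (card (jump_rows \<theta> j w N))
      \<le> real (card {l. l < N \<and> track_jumps D quant (row_apx \<theta> (w 0) j) (\<lambda>l. \<theta> (w (Suc l)) j) l})"
    unfolding jump_rows_def by (simp add: card_image_le)
  also have "\<dots> \<le> variation (case_nat (\<theta> (w 0) j) (\<lambda>l. \<theta> (w (Suc l)) j)) N / (D - d)"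
    by (rule card_track_jumps_le[OF quant_err_le row_apx_err]) (use grid_pos grid_le thresholds in linarith)
  also have "case_nat (\<theta> (w 0) j) (\<lambda>l. \<theta> (w (Suc l)) j) = (\<lambda>l. \<theta> (w l) j)"
    by (auto simp: fun_eq_iff split: nat.split)
  finally show ?thesis .
qed

lemma col_jumps_subset:
  assumes b: "b < s"
  shows "{i. i < m \<and> 0 < depth b i \<and>
      track_jumps D quant (row_apx \<theta> (lead b i) j) (col_path \<theta> b i j) (depth b i - 1)}
    \<subseteq> jump_rows \<theta> j (\<lambda>l. b - l) b \<union> (\<Union>r\<in>leaders b. jump_rows \<theta> j (\<lambda>l. r + l) (min (m - Suc r) (s - 1)))"
    (is "?C \<subseteq> _")
proof
  fix i assume i: "i \<in> ?C"
  show "i \<in> jump_rows \<theta> j (\<lambda>l. b - l) b \<union> (\<Union>r\<in>leaders b. jump_rows \<theta> j (\<lambda>l. r + l) (min (m - Suc r) (s - 1)))"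
  proof (cases "i < b")
    case True
    then have "col_path \<theta> b i j = (\<lambda>l. \<theta> (b - Suc l) j)" "lead b i = b" "depth b i - 1 = b - Suc i"
      by (auto simp: col_path_def walk_def lead_def depth_def)
    then have "i \<in> jump_rows \<theta> j (\<lambda>l. b - l) b"
      using i True unfolding jump_rows_def by (intro image_eqI[of _ _ "b - Suc i"]) auto
    then show ?thesis by simp
  next
    case False
    let ?r = "lead b i"
    have r: "b \<le> ?r" "?r < i" "i < ?r + s"
      using lead_ge[of b i] lead_gt[of b i] False i by (auto simp: depth_def)
    have "?r \<in> leaders b"
      using depth_lead[of b i] depth_eq_0_iff[OF b] lead_less[OF b] i unfolding leaders_def by auto
    moreover have "col_path \<theta> b i j = (\<lambda>l. \<theta> (?r + Suc l) j)" "depth b i - 1 = i - Suc ?r"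
      using False by (auto simp: col_path_def walk_def depth_def)
    then have "i \<in> jump_rows \<theta> j (\<lambda>l. ?r + l) (min (m - Suc ?r) (s - 1))"
      using i r unfolding jump_rows_def by (intro image_eqI[of _ _ "i - Suc ?r"]) auto
    ultimately show ?thesis by blast
  qed
qed

lemma card_col_jumps_le:
  assumes b: "b < s"
  shows "real (card {i. i < m \<and> 0 < depth b i \<and>
      track_jumps D quant (row_apx \<theta> (lead b i) j) (col_path \<theta> b i j) (depth b i - 1)})
    \<le> variation (\<lambda>i. \<theta> i j) (m - 1) / (D - d)"
    (is "real (card ?C) \<le> _")
proof -
  let ?g = "\<lambda>l. \<bar>\<theta> (Suc l) j - \<theta> l j\<bar>" and ?len = "\<lambda>r. min (m - Suc r) (s - 1)"
  let ?T = "jump_rows \<theta> j (\<lambda>l. b - l) b" and ?B = "\<lambda>r. jump_rows \<theta> j (\<lambda>l. r + l) (?len r)"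
  have fin: "finite (leaders b)" "finite (jump_rows \<theta> j w N)" for w N
    unfolding leaders_def jump_rows_def by auto
  have "card ?C \<le> card (?T \<union> (\<Union>r\<in>leaders b. ?B r))"
    by (rule card_mono[OF _ col_jumps_subset[OF b]]) (use fin in blast)
  also have "\<dots> \<le> card ?T + card (\<Union>r\<in>leaders b. ?B r)" by (rule card_Un_le)
  also have "card (\<Union>r\<in>leaders b. ?B r) \<le> (\<Sum>r\<in>leaders b. card (?B r))" by (rule card_UN_le[OF fin(1)])
  finally have "real (card ?C) \<le> real (card ?T) + (\<Sum>r\<in>leaders b. real (card (?B r)))"
    unfolding of_nat_sum[symmetric] of_nat_add[symmetric] of_nat_le_iff by simp
  also have "\<dots> \<le> (\<Sum>l<b. ?g l) / (D - d) + (\<Sum>r\<in>leaders b. (\<Sum>l\<in>{r..<r + ?len r}. ?g l) / (D - d))"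
  proof (intro add_mono sum_mono)
    show "real (card ?T) \<le> (\<Sum>l<b. ?g l) / (D - d)"
      using card_jump_rows_le[of \<theta> j "\<lambda>l. b - l" b] variation_comp_diff[of b b "\<lambda>i. \<theta> i j"]
      by (simp add: atLeast0LessThan)
    show "real (card (?B r)) \<le> (\<Sum>l\<in>{r..<r + ?len r}. ?g l) / (D - d)" for r
      using card_jump_rows_le[of \<theta> j "\<lambda>l. r + l" "?len r"] variation_comp_add[of "\<lambda>i. \<theta> i j" r "?len r"]
      by simp
  qed
  also have "\<dots> = ((\<Sum>l<b. ?g l) + (\<Sum>r\<in>leaders b. \<Sum>l\<in>{r..<r + ?len r}. ?g l)) / (D - d)"
    by (simp add: sum_divide_distrib add_divide_distrib)
  also have "\<dots> \<le> (\<Sum>l<m - 1. ?g l) / (D - d)"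
    using sum_block_windows_le[OF b, of ?g] grid_pos grid_le thresholds by (intro divide_right_mono) auto
  finally show ?thesis by (simp add: variation_def)
qed

lemma card_jumps_le:
  assumes b: "b < s"
  shows "real (card (jumps \<theta> b)) \<le> real (card (leaders b))
    + (\<Sum>r\<in>leaders b. variation (\<theta> r) (n - 1)) / (d - \<eta> / 2) + TV_c m n \<theta> / (D - d)"
proof -
  let ?R = "\<lambda>r. {j. j < n \<and> (j = 0 \<or> track_jumps d quant (quant (\<theta> r 0)) (\<theta> r) j)}"
  let ?C = "\<lambda>j. {i. i < m \<and> 0 < depth b i \<and>
      track_jumps D quant (row_apx \<theta> (lead b i) j) (col_path \<theta> b i j) (depth b i - 1)}"
  have fin: "finite (leaders b)" unfolding leaders_def by simp
  have "jumps \<theta> b \<subseteq> (SIGMA r:leaders b. ?R r) \<union> (\<Union>j<n. ?C j \<times> {j})"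
    using depth_eq_0_iff[OF b] unfolding jumps_def leaders_def by auto
  then have "card (jumps \<theta> b) \<le> card ((SIGMA r:leaders b. ?R r) \<union> (\<Union>j<n. ?C j \<times> {j}))"
    by (rule card_mono[rotated]) (use fin in auto)
  also have "\<dots> \<le> card (SIGMA r:leaders b. ?R r) + card (\<Union>j<n. ?C j \<times> {j})"
    by (rule card_Un_le)
  also have "card (\<Union>j<n. ?C j \<times> {j}) \<le> (\<Sum>j<n. card (?C j))"
    using card_UN_le[of "{..<n}" "\<lambda>j. ?C j \<times> {j}"] by (simp add: card_cartesian_product)
  finally have "card (jumps \<theta> b) \<le> (\<Sum>r\<in>leaders b. card (?R r)) + (\<Sum>j<n. card (?C j))"
    using fin by simp
  then have "real (card (jumps \<theta> b)) \<le> (\<Sum>r\<in>leaders b. real (card (?R r))) + (\<Sum>j<n. real (card (?C j)))"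
    unfolding of_nat_sum[symmetric] of_nat_add[symmetric] of_nat_le_iff .
  also have "\<dots> \<le> (\<Sum>r\<in>leaders b. 1 + variation (\<theta> r) (n - 1) / (d - \<eta> / 2))
      + (\<Sum>j<n. variation (\<lambda>i. \<theta> i j) (m - 1) / (D - d))"
    using card_row_jumps_le card_col_jumps_le[OF b] by (intro add_mono sum_mono) auto
  also have "\<dots> = real (card (leaders b)) + (\<Sum>r\<in>leaders b. variation (\<theta> r) (n - 1)) / (d - \<eta> / 2)
      + TV_c m n \<theta> / (D - d)"
    by (simp add: sum.distrib sum_divide_distrib TV_c_eq)
  finally show ?thesis .
qed

end

section \<open>Covering numbers\<close>

lemma covnum_le_card_codes:
  assumes "A \<subseteq> mats m n" "finite (code ` A)"
    and "\<And>\<theta>. \<theta> \<in> A \<Longrightarrow> c \<theta> \<in> mats m n \<and> frob m n (\<lambda>i j. \<theta> i j - c \<theta> i j) \<le> \<tau>"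
    and "\<And>\<theta> \<theta>'. \<theta> \<in> A \<Longrightarrow> \<theta>' \<in> A \<Longrightarrow> code \<theta> = code \<theta>' \<Longrightarrow> c \<theta> = c \<theta>'"
  shows "covnum m n A \<tau> \<le> card (code ` A)"
proof -
  define h where "h p = c (SOME \<theta>. \<theta> \<in> A \<and> code \<theta> = p)" for p
  have "h (code \<theta>) = c \<theta>" if "\<theta> \<in> A" for \<theta>
    unfolding h_def using someI[of "\<lambda>\<theta>'. \<theta>' \<in> A \<and> code \<theta>' = code \<theta>" \<theta>] that assms(4) by blast
  then have centres: "c ` A = h ` code ` A" by (auto simp: image_image)
  have "finite (c ` A)" unfolding centres using assms(2) by simp
  moreover have "c ` A \<subseteq> mats m n" "A \<subseteq> (\<Union>c'\<in>c ` A. {\<theta> \<in> mats m n. frob m n (\<lambda>i j. \<theta> i j - c' i j) \<le> \<tau>})"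
    using assms(1,3) by auto
  ultimately have "covnum m n A \<tau> \<le> card (c ` A)"
    unfolding covnum_def by (intro cINF_lower) auto
  also have "\<dots> \<le> card (code ` A)" unfolding centres by (rule card_image_le[OF assms(2)])
  finally show ?thesis .
qed

lemma abs_le_frob:
  assumes "i < m" "j < n"
  shows "\<bar>\<theta> i j\<bar> \<le> frob m n \<theta>"
proof -
  have "(\<theta> i j)\<^sup>2 \<le> (\<Sum>j'<n. (\<theta> i j')\<^sup>2)"
    using assms by (intro member_le_sum[of j "{..<n}" "\<lambda>j'. (\<theta> i j')\<^sup>2", simplified]) auto
  also have "\<dots> \<le> (\<Sum>i'<m. \<Sum>j'<n. (\<theta> i' j')\<^sup>2)"
    using assms by (intro member_le_sum[of i "{..<m}" "\<lambda>i'. \<Sum>j'<n. (\<theta> i' j')\<^sup>2", simplified])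
      (auto intro: sum_nonneg)
  finally have "\<bar>\<theta> i j\<bar>\<^sup>2 \<le> (\<Sum>i'<m. \<Sum>j'<n. (\<theta> i' j')\<^sup>2)" by simp
  then show ?thesis unfolding frob_def by (rule real_le_rsqrt)
qed

lemma calA_entry_le:
  assumes "\<theta> \<in> calA m n u v t" "t \<le> 1"
  shows "\<bar>\<theta> i j\<bar> \<le> 1"
proof (cases "i < m \<and> j < n")
  case True
  then show ?thesis using abs_le_frob[of i m j n \<theta>] assms unfolding calA_def by auto
qed (use assms in \<open>auto simp: calA_def mats_def\<close>)

context tv_approx
begin

definition grid_bound :: int where
  "grid_bound = \<lceil>1 / \<eta>\<rceil> + 1"

definition code_alphabet :: "(nat \<times> nat \<times> int) set" where
  "code_alphabet = {..<m} \<times> {..<n} \<times> {-grid_bound..grid_bound}"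

lemma abs_round_le_grid_bound:
  assumes "\<bar>x\<bar> \<le> 1"
  shows "\<bar>round (x / \<eta>)\<bar> \<le> grid_bound"
proof -
  have "\<bar>x / \<eta>\<bar> \<le> 1 / \<eta>" using assms grid_pos by (simp add: abs_div divide_right_mono)
  then have "\<bar>real_of_int (round (x / \<eta>))\<bar> \<le> 1 / 2 + real_of_int \<lceil>1 / \<eta>\<rceil>"
    using of_int_round_abs_le[of "x / \<eta>"] le_of_int_ceiling[of "1 / \<eta>"] by linarith
  then show ?thesis unfolding grid_bound_def by linarith
qed

lemma code_subset_alphabet:
  assumes "\<And>i j. \<bar>\<theta> i j\<bar> \<le> 1"
  shows "code \<theta> b \<subseteq> code_alphabet"
proof -
  have "round (\<theta> i j / \<eta>) \<in> {-grid_bound..grid_bound}" for i j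
    using abs_round_le_grid_bound[OF assms[of i j]] by (auto simp: abs_le_iff)
  then show ?thesis using jumps_subset[of \<theta> b] unfolding code_def code_alphabet_def by auto
qed

lemma covnum_le_codes:
  assumes A: "A \<subseteq> mats m n" "\<And>\<theta> i j. \<theta> \<in> A \<Longrightarrow> \<bar>\<theta> i j\<bar> \<le> 1"
    and good: "\<And>\<theta>. \<theta> \<in> A \<Longrightarrow>
      \<exists>b<s. card (code \<theta> b) \<le> P \<and> frob m n (\<lambda>i j. \<theta> i j - apx \<theta> b i j) \<le> \<tau>"
  shows "covnum m n A \<tau> \<le> s * (card code_alphabet ^ P + 1)"
proof -
  define b where "b \<theta> = (SOME b. b < s \<and> card (code \<theta> b) \<le> P \<and> frob m n (\<lambda>i j. \<theta> i j - apx \<theta> b i j) \<le> \<tau>)"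
    for \<theta>
  have b: "b \<theta> < s" "card (code \<theta> (b \<theta>)) \<le> P" "frob m n (\<lambda>i j. \<theta> i j - apx \<theta> (b \<theta>) i j) \<le> \<tau>"
    if "\<theta> \<in> A" for \<theta>
    using someI_ex[OF good[OF that]] unfolding b_def by blast+
  let ?codes = "{..<s} \<times> {X. X \<subseteq> code_alphabet \<and> card X \<le> P}"
  have fin: "finite code_alphabet" unfolding code_alphabet_def by simp
  have codes: "(\<lambda>\<theta>. (b \<theta>, code \<theta> (b \<theta>))) ` A \<subseteq> ?codes"
  proof (rule image_subsetI)
    fix \<theta> assume "\<theta> \<in> A"
    moreover from this have "code \<theta> (b \<theta>) \<subseteq> code_alphabet" using code_subset_alphabet A(2) by blast
    ultimately show "(b \<theta>, code \<theta> (b \<theta>)) \<in> ?codes" using b by auto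
  qed
  have fin_codes: "finite ?codes"
    using fin finite_subset[of "{X. X \<subseteq> code_alphabet \<and> card X \<le> P}" "Pow code_alphabet"] by auto
  have close: "apx \<theta> (b \<theta>) \<in> mats m n \<and> frob m n (\<lambda>i j. \<theta> i j - apx \<theta> (b \<theta>) i j) \<le> \<tau>"
    if "\<theta> \<in> A" for \<theta>
    using b(3)[OF that] apx_mats by blast
  have det: "apx \<theta> (b \<theta>) = apx \<theta>' (b \<theta>')"
    if "\<theta> \<in> A" "\<theta>' \<in> A" "(b \<theta>, code \<theta> (b \<theta>)) = (b \<theta>', code \<theta>' (b \<theta>'))" for \<theta> \<theta>'
  proof -
    have same_b: "b \<theta>' = b \<theta>" using arg_cong[OF that(3), of fst] by simp
    have "code \<theta> (b \<theta>) = code \<theta>' (b \<theta>')" using arg_cong[OF that(3), of snd] by simp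
    then have "code \<theta> (b \<theta>) = code \<theta>' (b \<theta>)" using same_b by simp
    then show ?thesis unfolding same_b by (rule apx_eq_if_code_eq[OF b(1)[OF that(1)]])
  qed
  have "covnum m n A \<tau> \<le> card ((\<lambda>\<theta>. (b \<theta>, code \<theta> (b \<theta>))) ` A)"
    using covnum_le_card_codes[OF A(1) finite_subset[OF codes fin_codes] close det] by blast
  also have "\<dots> \<le> card ?codes" by (rule card_mono[OF fin_codes codes])
  also have "\<dots> = s * card {X. X \<subseteq> code_alphabet \<and> card X \<le> P}"
    by (simp add: card_cartesian_product)
  also have "\<dots> \<le> s * (card code_alphabet ^ P + 1)"
    by (rule mult_le_mono2[OF card_subsets_card_le[OF fin]])
  finally show ?thesis .
qed

end

lemma ln_emn_ge_1:
  assumes "0 < m" "0 < n" "0 < \<tau>" "\<tau> \<le> 1"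
  shows "1 \<le> ln (exp 1 * real m * real n / \<tau>)"
proof -
  have "1 \<le> real m * real n / \<tau>"
    using assms mult_mono[of 1 "real m" 1 "real n"] by (simp add: le_divide_eq)
  then have "exp 1 * 1 \<le> exp 1 * (real m * real n / \<tau>)" by (intro mult_left_mono) auto
  then have "ln (exp 1) \<le> ln (exp 1 * (real m * real n / \<tau>))" by (intro ln_mono) auto
  then show ?thesis by (simp add: mult.assoc)
qed

text \<open>With \<open>d = row_thr\<close> and \<open>c = col_weight\<close>, the leader-row error \<open>4 m n d\<^sup>2\<close> equals
  \<open>\<tau>\<^sup>2 / 2\<close> and the column error \<open>2 c (s - 1) v\<close> is at most \<open>\<tau>\<^sup>2 / 2\<close>; the column threshold
  is \<open>max c (2 d)\<close>. The case distinction in \<open>c\<close> only avoids a division by zero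
  when there is no column error.\<close>

locale tv_cover =
  fixes m n :: nat and u v \<tau> :: real and s :: nat
  assumes m_pos: "0 < m" and n_pos: "0 < n" and u_nonneg: "0 \<le> u" and v_nonneg: "0 \<le> v"
    and \<tau>_pos: "0 < \<tau>" and \<tau>_le_1: "\<tau> \<le> 1" and s_pos: "0 < s" and s_le_m: "s \<le> m"
begin

definition row_thr :: real where
  "row_thr = \<tau> / (2 * sqrt (2 * real m * real n))"

definition col_weight :: real where
  "col_weight = (if 1 < s \<and> 0 < v then \<tau>\<^sup>2 / (4 * real (s - 1) * v) else 2 * v + 1)"

definition budget :: real where
  "budget = real (m - 1) / real s + 4 * u * sqrt (real m * real n) / (real s * \<tau>)
    + 8 * real (s - 1) * v\<^sup>2 / \<tau>\<^sup>2 + 2"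

lemma mn_ge_1: "1 \<le> real m * real n"
  using mult_mono[of 1 "real m" 1 "real n"] m_pos n_pos by simp

lemma row_thr_pos: "0 < row_thr"
  unfolding row_thr_def using \<tau>_pos mn_ge_1 by simp

lemma col_weight_pos: "0 < col_weight"
  unfolding col_weight_def using \<tau>_pos v_nonneg by (auto intro!: divide_pos_pos)

sublocale tv_approx m n s row_thr "max col_weight (2 * row_thr)" "row_thr / 2"
  by unfold_locales (use s_pos s_le_m row_thr_pos in auto)

lemma row_err_budget: "4 * real m * real n * row_thr\<^sup>2 = \<tau>\<^sup>2 / 2"
proof -
  have "(2 * sqrt (2 * real m * real n))\<^sup>2 = 8 * (real m * real n)"
    using mn_ge_1 by (simp add: power_mult_distrib)
  then show ?thesis using m_pos n_pos by (simp add: row_thr_def power_divide field_simps)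
qed

lemma sq_err_budget:
  assumes "0 \<le> X" "X \<le> v"
  shows "4 * real m * real n * row_thr\<^sup>2 + 2 * col_weight * real (s - 1) * X \<le> \<tau>\<^sup>2"
proof (cases "1 < s \<and> 0 < v")
  case True
  have "2 * col_weight * real (s - 1) * X \<le> 2 * col_weight * real (s - 1) * v"
    using assms col_weight_pos by (intro mult_left_mono) auto
  also have "\<dots> = \<tau>\<^sup>2 / 2" unfolding col_weight_def using True by (simp add: field_simps)
  finally show ?thesis using row_err_budget by simp
next
  case False
  then have "2 * col_weight * real (s - 1) * X = 0" using assms s_pos by auto
  then show ?thesis using row_err_budget zero_le_power2[of \<tau>] by linarith
qed

lemma col_jump_budget:
  assumes "0 \<le> X" "X \<le> v"
  shows "X / (max col_weight (2 * row_thr) - row_thr) \<le> 8 * real (s - 1) * v\<^sup>2 / \<tau>\<^sup>2 + 1"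
proof -
  have "X / (max col_weight (2 * row_thr) - row_thr) \<le> v / (col_weight / 2)"
    using assms col_weight_pos row_thr_pos
    by (intro frac_le) (auto simp: max_def)
  also have "\<dots> \<le> 8 * real (s - 1) * v\<^sup>2 / \<tau>\<^sup>2 + 1"
  proof (cases "1 < s \<and> 0 < v")
    case True
    then have "v / (col_weight / 2) = 8 * real (s - 1) * v\<^sup>2 / \<tau>\<^sup>2"
      unfolding col_weight_def using \<tau>_pos by (simp add: field_simps power2_eq_square)
    then show ?thesis by simp
  next
    case False
    then have "v / (col_weight / 2) \<le> 1" unfolding col_weight_def using v_nonneg by simp
    moreover have "0 \<le> 8 * real (s - 1) * v\<^sup>2 / \<tau>\<^sup>2" by simp
    ultimately show ?thesis by linarith
  qed
  finally show ?thesis .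
qed

lemma row_jump_budget:
  assumes "X \<le> u / real s"
  shows "X / (row_thr - row_thr / 2 / 2) \<le> 4 * u * sqrt (real m * real n) / (real s * \<tau>)"
proof -
  have sqrt2: "sqrt (2 * real m * real n) = sqrt 2 * sqrt (real m * real n)"
    by (simp add: real_sqrt_mult)
  have "sqrt 2 \<le> 3 / 2" by (rule real_le_lsqrt) (auto simp: power2_eq_square)
  then have sqrt2_le: "8 * sqrt 2 * (u * sqrt (real m * real n)) \<le> 12 * (u * sqrt (real m * real n))"
    using u_nonneg by (intro mult_right_mono) auto
  have "X / (row_thr - row_thr / 2 / 2) \<le> (u / real s) / (row_thr - row_thr / 2 / 2)"
    using assms row_thr_pos by (intro divide_right_mono) auto
  also have "\<dots> = 8 * sqrt 2 * (u * sqrt (real m * real n)) / (3 * real s * \<tau>)"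
    using s_pos \<tau>_pos mn_ge_1 unfolding row_thr_def sqrt2 by (simp add: field_simps)
  also have "\<dots> \<le> 4 * u * sqrt (real m * real n) / (real s * \<tau>)"
    using sqrt2_le s_pos \<tau>_pos by (simp add: field_simps)
  finally show ?thesis .
qed

text \<open>The offset is chosen so that the leader rows carry at most a \<open>1 / s\<close> share of the row
  variation.\<close>

lemma calA_apx:
  assumes "\<theta> \<in> calA m n u v t"
  shows "\<exists>b<s. card (code \<theta> b) \<le> budget \<and> frob m n (\<lambda>i j. \<theta> i j - apx \<theta> b i j) \<le> \<tau>"
proof -
  obtain b where b: "b < s" and avg: "(\<Sum>r\<in>leaders b. variation (\<theta> r) (n - 1)) \<le> TV_r m n \<theta> / real s"
    using ex_leaders_sum_le[of "\<lambda>r. variation (\<theta> r) (n - 1)"] by (auto simp: TV_r_eq)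
  have tv: "TV_r m n \<theta> \<le> u" "TV_c m n \<theta> \<le> v" using assms unfolding calA_def by auto
  then have "(\<Sum>r\<in>leaders b. variation (\<theta> r) (n - 1)) \<le> u / real s"
    using avg s_pos by (meson divide_right_mono of_nat_0_le_iff order_trans)
  then have "real (card (jumps \<theta> b)) \<le> budget"
    using card_jumps_le[OF b, of \<theta>] card_leaders_le[of b] row_jump_budget
      col_jump_budget[OF TV_c_nonneg tv(2)] unfolding budget_def by fastforce
  then have "card (code \<theta> b) \<le> budget"
    using card_code_le[of \<theta> b] by (meson of_nat_le_iff order_trans)
  moreover have "(\<Sum>i<m. \<Sum>j<n. (\<theta> i j - apx \<theta> b i j)\<^sup>2) \<le> \<tau>\<^sup>2"
    using apx_sq_err_sum[OF b col_weight_pos, of \<theta>] sq_err_budget[OF TV_c_nonneg tv(2)] by simp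
  then have "frob m n (\<lambda>i j. \<theta> i j - apx \<theta> b i j) \<le> \<tau>"
    unfolding frob_def using \<tau>_pos by (simp add: real_sqrt_le_iff real_le_lsqrt)
  ultimately show ?thesis using b by blast
qed

lemma covnum_calA_le:
  assumes "t \<le> 1"
  shows "covnum m n (calA m n u v t) \<tau> \<le> s * (card code_alphabet ^ nat \<lfloor>budget\<rfloor> + 1)"
proof (rule covnum_le_codes)
  show "calA m n u v t \<subseteq> mats m n" unfolding calA_def by auto
  show "\<bar>\<theta> i j\<bar> \<le> 1" if "\<theta> \<in> calA m n u v t" for \<theta> i j by (rule calA_entry_le[OF that assms])
  show "\<exists>b<s. card (code \<theta> b) \<le> nat \<lfloor>budget\<rfloor> \<and> frob m n (\<lambda>i j. \<theta> i j - apx \<theta> b i j) \<le> \<tau>"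
    if "\<theta> \<in> calA m n u v t" for \<theta>
    using calA_apx[OF that] by (auto intro: le_nat_floor)
qed


lemma grid_bound_ge_1: "1 \<le> grid_bound"
proof -
  have "-1 < 1 / (row_thr / 2)" by (rule less_trans[of _ 0]) (simp_all add: row_thr_pos)
  then show ?thesis unfolding grid_bound_def using zero_le_ceiling by simp
qed

lemma card_code_alphabet: "real (card code_alphabet) = real m * real n * (2 * real_of_int grid_bound + 1)"
proof -
  have "card code_alphabet = m * (n * nat (2 * grid_bound + 1))"
    unfolding code_alphabet_def by (simp add: card_cartesian_product)
  then show ?thesis using grid_bound_ge_1 by simp
qed

lemma card_code_alphabet_ge: "2 * real s \<le> real (card code_alphabet)"
proof -
  have "2 * real s \<le> real m * 1 * 3" using s_le_m by simp
  also have "\<dots> \<le> real m * real n * (2 * real_of_int grid_bound + 1)"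
    using n_pos grid_bound_ge_1 by (intro mult_mono) auto
  finally show ?thesis using card_code_alphabet by simp
qed

lemma card_code_alphabet_le: "real (card code_alphabet) \<le> (exp 1 * real m * real n / \<tau>) ^ 5"
proof -
  define Z where "Z = real m * real n / \<tau>"
  have Z: "1 \<le> Z" "real m * real n \<le> Z"
    unfolding Z_def using mn_ge_1 \<tau>_pos \<tau>_le_1 by (auto simp: le_divide_eq mult_left_le)
  have "1 \<le> 2 * real m * real n" using mn_ge_1 by simp
  then have "(2 * real m * real n) * 1 \<le> (2 * real m * real n) * (2 * real m * real n)"
    by (intro mult_left_mono) auto
  then have "sqrt (2 * real m * real n) \<le> 2 * real m * real n"
    by (intro real_le_lsqrt) (auto simp: power2_eq_square)
  then have "1 / (row_thr / 2) \<le> 8 * Z"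
    unfolding row_thr_def Z_def using \<tau>_pos mn_ge_1 by (simp add: field_simps)
  then have K: "real_of_int grid_bound \<le> 8 * Z + 2"
    unfolding grid_bound_def using of_int_ceiling_le_add_one[of "1 / (row_thr / 2)"] by linarith
  have "real (card code_alphabet) \<le> Z * (21 * Z)"
    unfolding card_code_alphabet using Z K mn_ge_1 grid_bound_ge_1 by (intro mult_mono) auto
  also have "\<dots> \<le> 32 * Z ^ 5"
  proof -
    have "Z * Z \<le> Z ^ 5" using power_increasing[of 2 5 Z] Z by (simp add: power2_eq_square)
    moreover have "Z * (21 * Z) = 21 * (Z * Z)" "0 \<le> Z * Z" by simp_all
    ultimately show ?thesis by linarith
  qed
  also have "\<dots> \<le> (exp 1 * Z) ^ 5"
  proof -
    have "2 * Z \<le> exp 1 * Z" using Z exp_ge_add_one_self[of 1] by (intro mult_right_mono) auto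
    then show ?thesis using power_mono[of "2 * Z" "exp 1 * Z" 5] Z by (simp add: power_mult_distrib)
  qed
  finally show ?thesis unfolding Z_def by (simp add: mult.assoc)
qed


text \<open>With \<open>P = \<lfloor>budget\<rfloor>\<close> and an alphabet of size \<open>A\<close>, the covering number is at most
  \<open>s (A\<^sup>P + 1) \<le> A\<^sup>P\<^sup>+\<^sup>1\<close> since \<open>2 s \<le> A\<close>, and \<open>A \<le> (e m n / \<tau>)\<^sup>5\<close>.\<close>

lemma ln_covnum_calA_le:
  assumes "t \<le> 1"
  shows "ln (real (covnum m n (calA m n u v t) \<tau>)) \<le> 5 * (budget + 1) * ln (exp 1 * real m * real n / \<tau>)"
proof -
  let ?N = "real (covnum m n (calA m n u v t) \<tau>)" and ?A = "real (card code_alphabet)"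
  let ?P = "nat \<lfloor>budget\<rfloor>" and ?L = "ln (exp 1 * real m * real n / \<tau>)"
  have L: "1 \<le> ?L" by (rule ln_emn_ge_1[OF m_pos n_pos \<tau>_pos \<tau>_le_1])
  have budget: "0 \<le> budget" "real ?P \<le> budget"
    unfolding budget_def using u_nonneg \<tau>_pos s_pos by (simp_all add: add_nonneg_nonneg)
  show ?thesis
  proof (cases "?N = 0")
    case False
    have A: "1 \<le> ?A" using card_code_alphabet_ge s_pos by simp
    have "?N \<le> real (s * (card code_alphabet ^ ?P + 1))"
      using covnum_calA_le[OF assms] by (simp only: of_nat_le_iff)
    also have "\<dots> = real s * (?A ^ ?P + 1)" by (simp add: algebra_simps)
    also have "\<dots> \<le> real s * (2 * ?A ^ ?P)"
      using one_le_power[OF A, of ?P] by (intro mult_left_mono) auto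
    also have "\<dots> = (2 * real s) * ?A ^ ?P" by simp
    also have "\<dots> \<le> ?A ^ Suc ?P" using card_code_alphabet_ge by (simp add: mult_right_mono)
    also have "\<dots> \<le> ((exp 1 * real m * real n / \<tau>) ^ 5) ^ Suc ?P"
      using card_code_alphabet_le A by (intro power_mono) auto
    also have "\<dots> = (exp 1 * real m * real n / \<tau>) ^ (5 * Suc ?P)" by (rule power_mult[symmetric])
    finally have "?N \<le> (exp 1 * real m * real n / \<tau>) ^ (5 * Suc ?P)" .
    then have "ln ?N \<le> ln ((exp 1 * real m * real n / \<tau>) ^ (5 * Suc ?P))"
      using False by (intro ln_mono) auto
    also have "\<dots> = real (5 * Suc ?P) * ?L"
      using m_pos n_pos \<tau>_pos by (intro ln_realpow)
    also have "\<dots> \<le> 5 * (budget + 1) * ?L" using budget L by (intro mult_right_mono) auto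
    finally show ?thesis .
  qed (use L budget in simp)
qed

end

section \<open>Choice of the block size\<close>

text \<open>The block size \<open>s\<close> balances \<open>A / s\<close> against \<open>8 s W\<close>. Below, \<open>A\<close> stands for
  \<open>m + 4 a \<surd>m\<close> and \<open>W\<close> for \<open>(v / \<tau>)\<^sup>2\<close>, where \<open>a = u \<surd>n / \<tau>\<close>; the hypotheses are what
  is known about them in terms of \<open>J = k + a \<surd>k\<close> and \<open>X = (v / \<tau>) \<surd>(m / k)\<close>.\<close>

lemma block_size_small_X:
  fixes m k :: nat and A W J X :: real
  assumes k: "1 \<le> k" "k < m" and A: "A \<le> 4 * (real m / real k) * J" and J: "1 \<le> J"
    and W: "0 \<le> W" "W * (real m / real k) = X\<^sup>2" and X: "X\<^sup>2 \<le> J"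
  shows "A / real (m div k) + 8 * real (m div k - 1) * W \<le> 16 * J"
proof -
  let ?s = "m div k"
  have kpos: "0 < real k" using k by simp
  have s: "1 \<le> ?s" using k by (simp add: div_greater_zero_iff Suc_leI)
  have sk: "real ?s * real k \<le> real m"
    using div_times_less_eq_dividend[of m k] by (simp flip: of_nat_mult)
  have "m < ?s * k + k" using mod_less_divisor[of k m] k div_mult_mod_eq[of m k] by linarith
  moreover have "k \<le> ?s * k" using s by simp
  ultimately have "m \<le> 2 * (?s * k)" by linarith
  then have "real m \<le> real (2 * (?s * k))" by (simp only: of_nat_le_iff)
  then have "real m \<le> 2 * (real k * real ?s)" by (simp add: mult.commute)
  then have "real m / (real k * real ?s) \<le> 2" using s kpos by (simp add: divide_le_eq)
  then have "4 * J * (real m / (real k * real ?s)) \<le> 4 * J * 2" using J by (intro mult_left_mono) auto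
  moreover have "A / real ?s \<le> 4 * (real m / real k) * J / real ?s" using A s by (intro divide_right_mono) auto
  moreover have "4 * (real m / real k) * J / real ?s = 4 * J * (real m / (real k * real ?s))" by simp
  ultimately have A_le: "A / real ?s \<le> 8 * J" by linarith
  have "real (?s - 1) \<le> real ?s" by simp
  also have "\<dots> \<le> real m / real k" using sk kpos by (simp add: le_divide_eq)
  finally have "8 * real (?s - 1) * W \<le> 8 * (real m / real k) * W" using W by (intro mult_right_mono) auto
  also have "\<dots> = 8 * X\<^sup>2" unfolding W(2)[symmetric] by (simp add: mult_ac)
  also have "\<dots> \<le> 8 * J" using X by simp
  finally show ?thesis using A_le by linarith
qed

lemma balance_block_size:
  fixes A W P y :: real
  assumes "0 < y" "A \<le> 4 * y * P" "W * y = P" "0 \<le> P" "0 \<le> W"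
  shows "\<exists>s. 1 \<le> s \<and> real s \<le> max 1 y \<and> A / real s + 8 * real (s - 1) * W \<le> 16 * P"
proof (cases "y < 1")
  case True
  then have "A \<le> 16 * P" using assms mult_right_mono[of y 1 P] by simp
  then show ?thesis by (intro exI[of _ 1]) simp
next
  case False
  define s where "s = nat \<lfloor>y\<rfloor>"
  have s: "1 \<le> s" "real s \<le> y" "y < real s + 1"
    unfolding s_def using False by (auto simp: le_nat_floor)
  have "A / real s \<le> 4 * y * P / real s" using assms(2) s(1) by (intro divide_right_mono) auto
  also have "\<dots> = 4 * P * (y / real s)" by simp
  also have "\<dots> \<le> 4 * P * 2" using s assms(4) by (intro mult_left_mono) (auto simp: divide_le_eq)
  finally have "A / real s \<le> 8 * P" by simp
  moreover have "8 * real (s - 1) * W \<le> 8 * y * W"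
    using s assms(5) by (intro mult_right_mono mult_left_mono) auto
  ultimately show ?thesis using s assms(3) by (intro exI[of _ s]) (auto simp: mult_ac)
qed

lemma block_size_large_X:
  fixes m k :: nat and A W J X :: real
  assumes k: "1 \<le> k" "k < m" and A: "A \<le> 4 * (real m / real k) * J" and J: "1 \<le> J"
    and W: "0 \<le> W" "W * (real m / real k) = X\<^sup>2" and X: "0 \<le> X" "J < X\<^sup>2"
  shows "\<exists>s. 1 \<le> s \<and> s \<le> m \<and> A / real s + 8 * real (s - 1) * W \<le> 16 * sqrt J * X"
proof -
  have sqrt_J: "0 < sqrt J" "sqrt J < X" "sqrt J * sqrt J = J"
    using J real_sqrt_less_mono[OF X(2)] X(1) by simp_all
  have kpos: "0 < real k" "0 < real m" using k by simp_all
  have Xpos: "0 < X" using sqrt_J(1,2) by linarith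
  define y where "y = (real m / real k) * sqrt J / X"
  have y_pos: "0 < y" unfolding y_def using sqrt_J kpos Xpos by simp
  have y_less: "y < real m"
  proof -
    have "(real m / real k) * (sqrt J / X) < (real m / real k) * 1"
      using sqrt_J Xpos kpos by (intro mult_strict_left_mono) auto
    moreover have "real m / real k * 1 \<le> real m"
      using k kpos mult_left_mono[of 1 "real k" "real m"] by (simp add: divide_le_eq)
    ultimately show ?thesis unfolding y_def by simp
  qed
  have "4 * y * (sqrt J * X) = 4 * (real m / real k) * (sqrt J * sqrt J)"
    unfolding y_def using Xpos by (simp add: field_simps)
  then have "A \<le> 4 * y * (sqrt J * X)" using A sqrt_J(3) by simp
  moreover have "W * y = (W * (real m / real k)) * sqrt J / X" unfolding y_def by simp
  then have "W * y = sqrt J * X" unfolding W(2) using Xpos by (simp add: power2_eq_square)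
  ultimately obtain s where s: "1 \<le> s" "real s \<le> max 1 y"
    "A / real s + 8 * real (s - 1) * W \<le> 16 * sqrt J * X"
    using balance_block_size[OF y_pos] W(1) X(1) sqrt_J(1)
    by (metis mult.assoc mult_nonneg_nonneg less_imp_le)
  moreover have "s \<le> m" using s(2) y_less k by (auto simp: max_def split: if_splits)
  ultimately show ?thesis by blast
qed

lemma exists_block_size:
  fixes m k :: nat and A W J X :: real
  assumes "1 \<le> k" "k < m" "A \<le> 4 * (real m / real k) * J" "1 \<le> J"
    and "0 \<le> W" "W * (real m / real k) = X\<^sup>2" "0 \<le> X"
  shows "\<exists>s. 1 \<le> s \<and> s \<le> m \<and> A / real s + 8 * real (s - 1) * W \<le> 16 * J + 16 * sqrt J * X"
proof (cases "X\<^sup>2 \<le> J")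
  case True
  have "0 \<le> 16 * sqrt J * X" using assms(4,7) by simp
  then have "A / real (m div k) + 8 * real (m div k - 1) * W \<le> 16 * J + 16 * sqrt J * X"
    using block_size_small_X[OF assms(1-6) True] by linarith
  moreover have "1 \<le> m div k" "m div k \<le> m" using assms(1,2) by (simp_all add: div_greater_zero_iff Suc_leI)
  ultimately show ?thesis by blast
next
  case False
  then show ?thesis using block_size_large_X[OF assms(1-7)] assms(4,7) by fastforce
qed

lemma add_sqrt_le_scaled:
  fixes m k :: nat and a :: real
  assumes "1 \<le> k" "k \<le> m" "0 \<le> a"
  shows "real m + 4 * a * sqrt (real m) \<le> 4 * (real m / real k) * (real k + a * sqrt (real k))"
proof -
  have kpos: "0 < real k" using assms(1) by simp
  have "sqrt (real m) * sqrt (real k) \<le> sqrt (real m) * sqrt (real m)"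
    using assms(2) by (intro mult_left_mono) auto
  then have "sqrt (real m) \<le> real m / sqrt (real k)" using kpos by (simp add: field_simps)
  then have "4 * a * sqrt (real m) \<le> 4 * a * (real m / sqrt (real k))"
    using assms(3) by (intro mult_left_mono) auto
  moreover have "4 * (real m / real k) * (real k + a * sqrt (real k))
      = 4 * real m + 4 * a * (real m / sqrt (real k))"
    using kpos by (simp add: field_simps)
  ultimately show ?thesis by simp
qed

lemma ln_covnum_calA_le_k_less_m:
  assumes "0 < m" "0 < n" "0 \<le> u" "0 \<le> v" "t \<le> 1" "0 < \<tau>" "\<tau> \<le> 1" "1 \<le> k" "k < m"
  defines "J \<equiv> real k + u * sqrt (real n * real k) / \<tau>"
    and "X \<equiv> v * sqrt (real m) / (\<tau> * sqrt (real k))"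
  shows "ln (real (covnum m n (calA m n u v t) \<tau>))
    \<le> 5 * (19 * J + 16 * sqrt J * X) * ln (exp 1 * real m * real n / \<tau>)"
proof -
  define a where "a = u * sqrt (real n) / \<tau>"
  have a: "0 \<le> a" "J = real k + a * sqrt (real k)"
    unfolding a_def J_def using assms by (simp_all add: real_sqrt_mult)
  have J: "1 \<le> J" using a assms(8) by (simp add: add_increasing2)
  have A: "real m + 4 * a * sqrt (real m) \<le> 4 * (real m / real k) * J"
    unfolding a(2) using add_sqrt_le_scaled[OF assms(8) less_imp_le[OF assms(9)] a(1)] .
  have W: "(v / \<tau>)\<^sup>2 * (real m / real k) = X\<^sup>2"
    unfolding X_def using assms by (simp add: power_divide power_mult_distrib)
  have "0 \<le> X" unfolding X_def using assms by simp
  then obtain s where s: "1 \<le> s" "s \<le> m" and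
    s_le: "(real m + 4 * a * sqrt (real m)) / real s + 8 * real (s - 1) * (v / \<tau>)\<^sup>2
      \<le> 16 * J + 16 * sqrt J * X"
    using exists_block_size[OF assms(8,9) A J zero_le_power2 W] by blast
  interpret tv_cover m n u v \<tau> s using assms s by unfold_locales auto
  have "4 * u * sqrt (real m * real n) / (real s * \<tau>) = 4 * a * sqrt (real m) / real s"
    unfolding a_def by (simp add: real_sqrt_mult mult_ac)
  then have "budget + 1 \<le> (real m + 4 * a * sqrt (real m)) / real s + 8 * real (s - 1) * (v / \<tau>)\<^sup>2 + 3"
    unfolding budget_def using s by (simp add: add_divide_distrib divide_right_mono power_divide)
  also have "\<dots> \<le> 19 * J + 16 * sqrt J * X" using s_le J by linarith
  finally have "5 * (budget + 1) * ln (exp 1 * real m * real n / \<tau>)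
      \<le> 5 * (19 * J + 16 * sqrt J * X) * ln (exp 1 * real m * real n / \<tau>)"
    using ln_emn_ge_1[OF assms(1,2,6,7)] by (intro mult_right_mono) auto
  then show ?thesis using ln_covnum_calA_le[OF assms(5)] by linarith
qed

lemma ln_covnum_calA_le_k_eq_m:
  assumes "0 < m" "0 < n" "0 \<le> u" "0 \<le> v" "t \<le> 1" "0 < \<tau>" "\<tau> \<le> 1" "k = m"
  shows "ln (real (covnum m n (calA m n u v t) \<tau>))
    \<le> 20 * (real k + u * sqrt (real n * real k) / \<tau>) * ln (exp 1 * real m * real n / \<tau>)"
proof -
  interpret tv_cover m n u v \<tau> 1 using assms by unfold_locales auto
  have "5 * (budget + 1) \<le> 20 * (real k + u * sqrt (real n * real k) / \<tau>)"
    unfolding budget_def using assms by (simp add: algebra_simps mult.commute[of "real n"])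
  then have "5 * (budget + 1) * ln (exp 1 * real m * real n / \<tau>)
      \<le> 20 * (real k + u * sqrt (real n * real k) / \<tau>) * ln (exp 1 * real m * real n / \<tau>)"
    using ln_emn_ge_1[OF assms(1,2,6,7)] by (intro mult_right_mono) auto
  then show ?thesis using ln_covnum_calA_le[OF assms(5)] by linarith
qed

text \<open>The constant \<open>100\<close> absorbs the numerical factors, using \<open>ln (e n) \<ge> 1\<close> and
  \<open>ln Q, ln J \<ge> 0\<close>.\<close>

lemma absorb_constant:
  fixes J X lg \<Lambda> L :: real
  assumes "1 \<le> J" "0 \<le> X" "1 \<le> lg" "1 \<le> \<Lambda>"
  shows "L \<le> 5 * (19 * J + 16 * sqrt J * X) * \<Lambda> \<Longrightarrow>
      L \<le> 100 * (100 * lg * J + sqrt (100 * lg * J) * X) * (ln (100 * lg * J + sqrt (100 * lg * J) * X) + \<Lambda>)"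
    and "L \<le> 20 * J * \<Lambda> \<Longrightarrow> L \<le> 100 * (100 * lg * J) * (ln (100 * lg * J) + \<Lambda>)"
proof -
  let ?J = "100 * lg * J"
  let ?Q = "?J + sqrt ?J * X"
  have J: "100 * J \<le> ?J" using assms mult_right_mono[of 1 lg "100 * J"] by simp
  then have J1: "1 \<le> ?J" using assms(1) by linarith
  then have "0 \<le> ?J" by linarith
  then have Q: "?J \<le> ?Q" using assms(2) by simp
  have "sqrt J * X \<le> sqrt ?J * X" using J assms by (intro mult_right_mono) auto
  moreover have "0 \<le> sqrt J * X" using assms by simp
  ultimately have "5 * (19 * J + 16 * sqrt J * X) \<le> 100 * ?Q"
    using J assms(1) unfolding mult.assoc[of 16] distrib_left by linarith
  then have "5 * (19 * J + 16 * sqrt J * X) * \<Lambda> \<le> 100 * ?Q * \<Lambda>"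
    using assms(4) by (intro mult_right_mono) auto
  also have "\<dots> \<le> 100 * ?Q * (ln ?Q + \<Lambda>)"
    using J1 Q by (intro mult_left_mono) auto
  finally show "L \<le> 5 * (19 * J + 16 * sqrt J * X) * \<Lambda> \<Longrightarrow> L \<le> 100 * ?Q * (ln ?Q + \<Lambda>)"
    by linarith
  have "20 * J * \<Lambda> \<le> 100 * ?J * \<Lambda>" using J assms(1,4) by (intro mult_right_mono) auto
  also have "\<dots> \<le> 100 * ?J * (ln ?J + \<Lambda>)" using J1 by (intro mult_left_mono) auto
  finally show "L \<le> 20 * J * \<Lambda> \<Longrightarrow> L \<le> 100 * ?J * (ln ?J + \<Lambda>)"
    by linarith
qed

lemma ln_covnum_calA_le_C100:
  assumes "0 < m" "0 < n" "0 \<le> u" "0 \<le> v" "t \<le> 1" "0 < \<tau>" "\<tau> \<le> 1" "1 \<le> k" "k \<le> m"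
  shows "let J = 100 * ln (exp 1 * real n) * (real k + u * sqrt (real n * real k) / \<tau>);
          L = ln (real (covnum m n (calA m n u v t) \<tau>));
          Q = J + sqrt J * (v * sqrt (real m)) / (\<tau> * sqrt (real k))
      in (k < m \<longrightarrow> L \<le> 100 * Q * (ln Q + ln (exp 1 * real m * real n / \<tau>))) \<and>
         (k = m \<longrightarrow> L \<le> 100 * J * (ln J + ln (exp 1 * real m * real n / \<tau>)))"
proof -
  have "1 \<le> real k + u * sqrt (real n * real k) / \<tau>" "0 \<le> v * sqrt (real m) / (\<tau> * sqrt (real k))"
    "1 \<le> ln (exp 1 * real n)" "1 \<le> ln (exp 1 * real m * real n / \<tau>)"
    using assms ln_emn_ge_1[of 1 n 1] ln_emn_ge_1[OF assms(1,2,6,7)] by (simp_all add: add_increasing2)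
  note absorb = absorb_constant[OF this]
  show ?thesis
    using absorb(1)[OF ln_covnum_calA_le_k_less_m[OF assms(1-8)]]
      absorb(2)[OF ln_covnum_calA_le_k_eq_m[OF assms(1-7)]]
    by (simp add: Let_def)
qed

theorem lemma5p17:
  "\<exists>C>0. \<forall>(m::nat) (n::nat) (u::real) (v::real) (t::real) (\<tau>::real) (k::nat).
     0 < m \<longrightarrow> 0 < n \<longrightarrow> 0 \<le> u \<longrightarrow> 0 \<le> v \<longrightarrow> t \<le> 1 \<longrightarrow> 0 < \<tau> \<longrightarrow> \<tau> \<le> 1 \<longrightarrow>
     1 \<le> k \<longrightarrow> k \<le> m \<longrightarrow>
     (let J = C * ln (exp 1 * real n) * (real k + u * sqrt (real n * real k) / \<tau>);
          L = ln (real (covnum m n (calA m n u v t) \<tau>));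
          Q = J + sqrt J * (v * sqrt (real m)) / (\<tau> * sqrt (real k))
      in (k < m \<longrightarrow> L \<le> C * Q * (ln Q + ln (exp 1 * real m * real n / \<tau>))) \<and>
         (k = m \<longrightarrow> L \<le> C * J * (ln J + ln (exp 1 * real m * real n / \<tau>))))"
  by (intro exI[of _ 100] conjI allI impI ln_covnum_calA_le_C100) simp_all

end
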